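(* Fix $r\ge 2$ and $\eta>0$. There is $c>0$ depending only on $\eta$ such that, if $p\gg\log n/n$, then a.a.s. for every $Q\in\mathcal{Q}_H$ with $Q\subseteq G_{n,p}$ and every $k\in[r]$, \[ |V^k(Q)|\ge\Big|\bigcup_{v\in V(Q)}N_Q(v)\cap V^k(Q)\Big|\ge c\cdot\min\{n,\,k(Q)\,np\}. \]
   Context: An $[r]$-coloured graph is a graph whose vertices are coloured from $[r]$ (not necessarily properly); $V^k(Q)$ denotes the vertices of $Q$ with colour $k$. $\mathcal{Q}_H$ is the family of $[r]$-coloured graphs $Q\subseteq K_n$ containing an independent set $X_Q\subseteq V^1(Q)$ of size $o(n)$ (bounded by a fixed function $s(n)=o(n)$) such that every edge of $Q$ has an endpoint in $X_Q$ and every $v\in X_Q$ has exactly $\eta np$ neighbours in $Q$ in each colour class $V^k(Q)$, $k\in[r]$ (assume $\eta np$ is an integer); $k(Q)=|X_Q|$. $Q\subseteq G_{n,p}$ means every edge of $Q$ is an edge of $G_{n,p}$. *)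

theory Defs
  imports "HOL-Probability.Probability"
begin

definition Kn_edges :: "nat \<Rightarrow> nat set set" where
  "Kn_edges n = {e. \<exists>i j. i < j \<and> j < n \<and> e = {i, j}}"

definition Gnp :: "nat \<Rightarrow> real \<Rightarrow> nat set set pmf" where
  "Gnp n p = map_pmf (\<lambda>f. {e \<in> Kn_edges n. f e})
                     (Pi_pmf (Kn_edges n) False (\<lambda>_. bernoulli_pmf p))"

definition coloured_graph :: "nat \<Rightarrow> nat \<Rightarrow> nat set \<Rightarrow> nat set set \<Rightarrow> (nat \<Rightarrow> nat) \<Rightarrow> bool" where
  "coloured_graph n r V E col \<longleftrightarrow>
     V \<subseteq> {..<n} \<and> E \<subseteq> {e. \<exists>u v. u \<in> V \<and> v \<in> V \<and> u \<noteq> v \<and> e = {u, v}} \<and>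
     (\<forall>v\<in>V. col v \<in> {1..r})"

definition colour_class :: "nat set \<Rightarrow> (nat \<Rightarrow> nat) \<Rightarrow> nat \<Rightarrow> nat set" where
  "colour_class V col k = {v \<in> V. col v = k}"

definition nbhd :: "nat set set \<Rightarrow> nat \<Rightarrow> nat set" where
  "nbhd E v = {u. {u, v} \<in> E}"

definition in_QH :: "nat \<Rightarrow> real \<Rightarrow> nat \<Rightarrow> real \<Rightarrow> (nat \<Rightarrow> real) \<Rightarrow>
    nat set \<Rightarrow> nat set set \<Rightarrow> (nat \<Rightarrow> nat) \<Rightarrow> nat set \<Rightarrow> bool" where
  "in_QH n p r \<eta> s V E col X \<longleftrightarrow>
     coloured_graph n r V E col \<and>
     X \<subseteq> colour_class V col 1 \<and>
     (\<forall>u\<in>X. \<forall>v\<in>X. {u, v} \<notin> E) \<and>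
     real (card X) \<le> s n \<and>
     (\<forall>e\<in>E. e \<inter> X \<noteq> {}) \<and>
     (\<forall>v\<in>X. \<forall>k\<in>{1..r}. real (card (nbhd E v \<inter> colour_class V col k)) = \<eta> * real n * p)"

end

theory Submission
  imports Defs
begin

text \<open>
  Suppose some \<open>Q \<subseteq> G(n,p)\<close> had a colour \<open>k\<close> for which the set \<open>U\<close> of colour-\<open>k\<close> neighbours
  has fewer than \<open>c min(n, tnp)\<close> vertices, where \<open>t = |X_Q|\<close>. Since \<open>X_Q\<close> is independent, each
  of its vertices has \<open>D = \<eta>np\<close> neighbours in \<open>W = U - X_Q\<close>, a set of size \<open>w < c min(n, tnp)\<close>.
  A union bound over \<open>X_Q\<close>, \<open>W\<close> and these neighbourhoods bounds the probability of such a
  configuration by \<open>\<Sum>_{t,w} C(n,t) C(n,w) (C(w,D) p^D)^t\<close>. As \<open>2w \<le> tD\<close> and \<open>w \<le> cn\<close>, the factor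
  \<open>C(n,w) \<le> (en/w)^w\<close> is absorbed by \<open>(C(w,D) p^D)^t \<le> (ew/\<eta>n)^{tD}\<close>, leaving
  \<open>(n e^{-D})^t \<le> n^{-3}\<close> once \<open>\<eta>np \<ge> 4 ln n\<close>; summing over \<open>t, w \<le> n\<close> gives \<open>2/n\<close>.
\<close>

lemma finite_Kn_edges: "finite (Kn_edges n)"
proof -
  have "Kn_edges n \<subseteq> Pow {..<n}" unfolding Kn_edges_def by auto
  then show ?thesis by (rule finite_subset) auto
qed

lemma prob_Gnp_superset:
  assumes F: "F \<subseteq> Kn_edges n" and p: "0 \<le> p" "p \<le> 1"
  shows "measure_pmf.prob (Gnp n p) {G. F \<subseteq> G} = p ^ card F"
proof -
  have fin: "finite (Kn_edges n)" by (rule finite_Kn_edges)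
  have "(\<lambda>f. {e \<in> Kn_edges n. f e}) -` {G. F \<subseteq> G}
      = Pi (Kn_edges n) (\<lambda>e. if e \<in> F then {True} else UNIV)"
    using F by (auto simp: Pi_def split: if_splits)
  then have "measure_pmf.prob (Gnp n p) {G. F \<subseteq> G}
     = measure_pmf.prob (Pi_pmf (Kn_edges n) False (\<lambda>_. bernoulli_pmf p))
         (Pi (Kn_edges n) (\<lambda>e. if e \<in> F then {True} else UNIV))"
    unfolding Gnp_def by simp
  also have "\<dots> = (\<Prod>e\<in>Kn_edges n. measure_pmf.prob (bernoulli_pmf p)
                                      (if e \<in> F then {True} else UNIV))"
    by (rule measure_Pi_pmf_Pi[OF fin])
  also have "\<dots> = (\<Prod>e\<in>Kn_edges n. if e \<in> F then p else 1)"
    by (rule prod.cong) (use p in \<open>auto simp: measure_pmf_single\<close>)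
  also have "\<dots> = p ^ card F"
    using F fin by (simp add: prod.If_cases Int_absorb1)
  finally show ?thesis .
qed

lemma measure_pmf_prob_UN_le:
  assumes "finite I" "\<And>i. i \<in> I \<Longrightarrow> measure_pmf.prob M (A i) \<le> f i"
  shows "measure_pmf.prob M (\<Union>i\<in>I. A i) \<le> (\<Sum>i\<in>I. f i)"
  using measure_pmf.finite_measure_subadditive_finite[of I A M] assms
    sum_mono[of I "\<lambda>i. measure_pmf.prob M (A i)" f]
  by simp

lemma measure_pmf_prob_tendsto_1:
  fixes M :: "nat \<Rightarrow> 'a pmf"
  assumes "f \<longlonglongrightarrow> 0" and "eventually (\<lambda>n. 1 - f n \<le> measure_pmf.prob (M n) (A n)) sequentially"
  shows "(\<lambda>n. measure_pmf.prob (M n) (A n)) \<longlonglongrightarrow> 1"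
proof (rule tendsto_sandwich[OF assms(2) _ _ tendsto_const])
  show "(\<lambda>n. 1 - f n) \<longlonglongrightarrow> 1" using tendsto_diff[OF tendsto_const assms(1)] by simp
qed simp

lemma eventually_four_ln_le:
  fixes p :: "nat \<Rightarrow> real"
  assumes "\<eta> > 0" and "filterlim (\<lambda>n. p n / (ln (real n) / real n)) at_top sequentially"
  shows "eventually (\<lambda>n. 4 * ln (real n) \<le> \<eta> * real n * p n) sequentially"
  using eventually_ge_at_top[of 2] assms(2)[unfolded filterlim_at_top, rule_format, of "4 / \<eta>"]
proof eventually_elim
  case (elim n)
  then have "ln (real n) / real n > 0" by simp
  with elim(2) have "4 / \<eta> * (ln (real n) / real n) \<le> p n"
    by (subst (asm) pos_le_divide_eq)
  then have "\<eta> * real n * (4 / \<eta> * (ln (real n) / real n)) \<le> \<eta> * real n * p n"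
    using assms(1) by (intro mult_left_mono) simp_all
  with assms(1) elim(1) show ?case by simp
qed

lemma mult_exp_neg_le_inverse_cube:
  assumes "n > 0" "4 * ln (real n) \<le> x"
  shows "real n * exp (- x) \<le> 1 / real n ^ 3"
proof -
  have "exp (- x) \<le> exp (- ln (real n ^ 4))"
    using assms by (simp add: ln_realpow)
  also have "\<dots> = 1 / real n ^ 4"
    using assms(1) by (simp add: exp_minus divide_inverse)
  finally have "real n * exp (- x) \<le> real n * (1 / real n ^ 4)"
    by (rule mult_left_mono) simp
  also have "\<dots> = 1 / real n ^ 3"
    using assms(1) by (simp add: eval_nat_numeral)
  finally show ?thesis .
qed

lemma power_div_fact_le_exp:
  fixes x :: real
  assumes "0 \<le> x"
  shows "x ^ k / fact k \<le> exp x"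
proof -
  have summable: "summable (\<lambda>n. x ^ n / fact n)"
    using summable_exp[of x] by (simp add: divide_inverse mult.commute)
  have "x ^ k / fact k \<le> (\<Sum>n. x ^ n / fact n)"
    using sum_le_suminf[OF summable, of "{k}"] assms by simp
  also have "\<dots> = exp x"
    by (simp add: exp_def scaleR_conv_of_real divide_inverse mult.commute)
  finally show ?thesis .
qed

lemma binomial_le_exp_pow:
  assumes "k \<ge> 1"
  shows "real (n choose k) \<le> (exp 1 * real n / real k) ^ k"
proof -
  have k: "real k > 0" using assms by simp
  have "real (n choose k) * real k ^ k \<le> real (n choose k) * (exp (real k) * fact k)"
    using power_div_fact_le_exp[of "real k" k] by (intro mult_left_mono) (auto simp: divide_le_eq)
  also have "\<dots> = exp (real k) * real ((n choose k) * fact k)" by simp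
  also have "\<dots> \<le> exp (real k) * real n ^ k"
    using binomial_fact_pow[of n k]
    by (intro mult_left_mono) (simp_all only: exp_ge_zero of_nat_le_iff flip: of_nat_power)
  also have "\<dots> = (exp 1 * real n / real k) ^ k * real k ^ k"
    using k by (simp add: power_divide power_mult_distrib flip: exp_of_nat_mult)
  finally show ?thesis using k by simp
qed

lemma binomial_mult_power_le:
  fixes p \<eta> :: real
  assumes "\<eta> > 0" "0 \<le> p" "n > 0" "\<eta> * real n * p \<le> real D" "D \<ge> 1"
  shows "real (w choose D) * p ^ D \<le> (exp 1 * real w / (\<eta> * real n)) ^ D"
proof -
  have "real (w choose D) * p ^ D \<le> (exp 1 * real w / real D) ^ D * p ^ D"
    using binomial_le_exp_pow[OF assms(5)] assms(2) by (intro mult_right_mono) simp_all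
  also have "\<dots> = (exp 1 * real w * (p / real D)) ^ D"
    by (simp flip: power_mult_distrib)
  also have "\<dots> \<le> (exp 1 * real w * (1 / (\<eta> * real n))) ^ D"
    using assms by (intro power_mono mult_left_mono) (simp_all add: divide_simps mult.commute)
  finally show ?thesis by simp
qed

definition star_edges :: "nat set \<Rightarrow> (nat \<Rightarrow> nat set) \<Rightarrow> nat set set" where
  "star_edges X \<phi> = (\<Union>x\<in>X. (\<lambda>y. {x, y}) ` \<phi> x)"

lemma card_star_edges:
  assumes "finite X" "finite W" "X \<inter> W = {}"
    and "\<And>x. x \<in> X \<Longrightarrow> \<phi> x \<subseteq> W \<and> card (\<phi> x) = D"
  shows "card (star_edges X \<phi>) = card X * D"
proof -
  have disjoint: "(\<lambda>y. {i, y}) ` \<phi> i \<inter> (\<lambda>y. {j, y}) ` \<phi> j = {}"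
    if "i \<in> X" "j \<in> X" "i \<noteq> j" for i j
    using that assms(3,4) by (fastforce simp: doubleton_eq_iff)
  have finite_\<phi>: "finite (\<phi> x)" if "x \<in> X" for x
    using that assms(2,4) finite_subset by blast
  have "card (star_edges X \<phi>) = (\<Sum>x\<in>X. card ((\<lambda>y. {x, y}) ` \<phi> x))"
    unfolding star_edges_def
    using disjoint assms(1) finite_\<phi> by (intro card_UN_disjoint) auto
  also have "\<dots> = (\<Sum>x\<in>X. D)"
    using assms(4) by (intro sum.cong refl) (auto simp: card_image inj_on_def doubleton_eq_iff)
  finally show ?thesis by simp
qed

lemma star_edges_subset_Kn_edges:
  assumes "X \<subseteq> {..<n}" "W \<subseteq> {..<n}" "X \<inter> W = {}" "\<And>x. x \<in> X \<Longrightarrow> \<phi> x \<subseteq> W"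
  shows "star_edges X \<phi> \<subseteq> Kn_edges n"
proof
  fix e assume "e \<in> star_edges X \<phi>"
  then obtain x y where xy: "x \<in> X" "y \<in> W" "e = {x, y}"
    unfolding star_edges_def using assms(4) by blast
  then have "x \<noteq> y" "x < n" "y < n" using assms(1-3) by auto
  then show "e \<in> Kn_edges n"
    unfolding Kn_edges_def xy(3)
    by (intro CollectI exI[of _ "min x y"] exI[of _ "max x y"]) (auto simp: min_def max_def)
qed

definition many_neighbours_in :: "nat \<Rightarrow> nat set \<Rightarrow> nat set \<Rightarrow> nat set set set" where
  "many_neighbours_in D X W = {G. \<forall>x\<in>X. \<exists>S\<subseteq>W. card S = D \<and> (\<forall>y\<in>S. {x, y} \<in> G)}"

lemma prob_many_neighbours_in_le:
  assumes p: "0 \<le> p" "p \<le> 1"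
    and X: "X \<subseteq> {..<n}" and W: "W \<subseteq> {..<n}" and disjoint: "X \<inter> W = {}"
  shows "measure_pmf.prob (Gnp n p) (many_neighbours_in D X W)
           \<le> real (card W choose D) ^ card X * p ^ (card X * D)"
proof -
  have finite_XW: "finite X" "finite W" using X W finite_subset by blast+
  define \<Phi> where "\<Phi> = (\<Pi>\<^sub>E x\<in>X. {S. S \<subseteq> W \<and> card S = D})"
  have "finite \<Phi>" unfolding \<Phi>_def using finite_XW by (intro finite_PiE) auto
  have "many_neighbours_in D X W \<subseteq> (\<Union>\<phi>\<in>\<Phi>. {G. star_edges X \<phi> \<subseteq> G})"
  proof
    fix G assume "G \<in> many_neighbours_in D X W"
    then have "\<forall>x\<in>X. \<exists>S. S \<subseteq> W \<and> card S = D \<and> (\<forall>y\<in>S. {x, y} \<in> G)"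
      unfolding many_neighbours_in_def by blast
    then obtain \<phi> where \<phi>: "\<forall>x\<in>X. \<phi> x \<subseteq> W \<and> card (\<phi> x) = D \<and> (\<forall>y\<in>\<phi> x. {x, y} \<in> G)"
      by (rule bchoice[THEN exE])
    then have "restrict \<phi> X \<in> \<Phi>" "star_edges X (restrict \<phi> X) \<subseteq> G"
      unfolding \<Phi>_def star_edges_def by auto
    then show "G \<in> (\<Union>\<phi>\<in>\<Phi>. {G. star_edges X \<phi> \<subseteq> G})" by blast
  qed
  then have "measure_pmf.prob (Gnp n p) (many_neighbours_in D X W)
      \<le> measure_pmf.prob (Gnp n p) (\<Union>\<phi>\<in>\<Phi>. {G. star_edges X \<phi> \<subseteq> G})"
    by (intro measure_pmf.finite_measure_mono) simp_all
  also have "\<dots> \<le> (\<Sum>\<phi>\<in>\<Phi>. measure_pmf.prob (Gnp n p) {G. star_edges X \<phi> \<subseteq> G})"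
    using \<open>finite \<Phi>\<close> by (intro measure_UNION_le) simp_all
  also have "\<dots> = (\<Sum>\<phi>\<in>\<Phi>. p ^ (card X * D))"
  proof (intro sum.cong refl)
    fix \<phi> assume "\<phi> \<in> \<Phi>"
    then have \<phi>: "\<And>x. x \<in> X \<Longrightarrow> \<phi> x \<subseteq> W \<and> card (\<phi> x) = D" unfolding \<Phi>_def by auto
    show "measure_pmf.prob (Gnp n p) {G. star_edges X \<phi> \<subseteq> G} = p ^ (card X * D)"
      using prob_Gnp_superset[OF star_edges_subset_Kn_edges[OF X W disjoint] p]
        card_star_edges[OF finite_XW disjoint] \<phi> by auto
  qed
  also have "\<dots> = real (card W choose D) ^ card X * p ^ (card X * D)"
    using finite_XW by (simp add: \<Phi>_def card_PiE n_subsets)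
  finally show ?thesis .
qed

lemma prob_many_neighbours_in_set_of_size_le:
  assumes p: "0 \<le> p" "p \<le> 1"
  shows "measure_pmf.prob (Gnp n p) (\<Union>X\<in>{X. X \<subseteq> {..<n} \<and> card X = t}.
            \<Union>W\<in>{W. W \<subseteq> {..<n} - X \<and> card W = w}. many_neighbours_in D X W)
         \<le> real (n choose t) * real (n choose w) * (real (w choose D) * p ^ D) ^ t"
proof -
  let ?b = "(real (w choose D) * p ^ D) ^ t"
  have "measure_pmf.prob (Gnp n p)
          (\<Union>W\<in>{W. W \<subseteq> {..<n} - X \<and> card W = w}. many_neighbours_in D X W) \<le> real (n choose w) * ?b"
    if X: "X \<subseteq> {..<n}" "card X = t" for X
  proof -
    have "measure_pmf.prob (Gnp n p)
            (\<Union>W\<in>{W. W \<subseteq> {..<n} - X \<and> card W = w}. many_neighbours_in D X W)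
        \<le> (\<Sum>W\<in>{W. W \<subseteq> {..<n} - X \<and> card W = w}. ?b)"
      using prob_many_neighbours_in_le[OF p X(1)] X(2)
      by (intro measure_pmf_prob_UN_le) (auto simp: power_mult power_mult_distrib mult.commute)
    also have "\<dots> \<le> real (card {W. W \<subseteq> {..<n} \<and> card W = w}) * ?b"
      using p by (auto intro!: mult_right_mono card_mono)
    finally show ?thesis by (simp add: n_subsets)
  qed
  then have "measure_pmf.prob (Gnp n p) (\<Union>X\<in>{X. X \<subseteq> {..<n} \<and> card X = t}.
            \<Union>W\<in>{W. W \<subseteq> {..<n} - X \<and> card W = w}. many_neighbours_in D X W)
        \<le> (\<Sum>X\<in>{X. X \<subseteq> {..<n} \<and> card X = t}. real (n choose w) * ?b)"
    by (intro measure_pmf_prob_UN_le) auto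
  then show ?thesis by (simp add: n_subsets)
qed

lemma prob_many_neighbours_in_small_set_le:
  assumes p: "0 \<le> p" "p \<le> 1" and "finite T" "\<And>t. t \<in> T \<Longrightarrow> finite (ws t)"
  shows "measure_pmf.prob (Gnp n p)
           {G. \<exists>t\<in>T. \<exists>w\<in>ws t. \<exists>X W. X \<subseteq> {..<n} \<and> card X = t \<and> W \<subseteq> {..<n} - X \<and> card W = w \<and>
                 G \<in> many_neighbours_in D X W}
         \<le> (\<Sum>t\<in>T. \<Sum>w\<in>ws t. real (n choose t) * real (n choose w) * (real (w choose D) * p ^ D) ^ t)"
proof -
  have "{G. \<exists>t\<in>T. \<exists>w\<in>ws t. \<exists>X W. X \<subseteq> {..<n} \<and> card X = t \<and> W \<subseteq> {..<n} - X \<and> card W = w \<and>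
            G \<in> many_neighbours_in D X W}
      = (\<Union>t\<in>T. \<Union>w\<in>ws t. \<Union>X\<in>{X. X \<subseteq> {..<n} \<and> card X = t}.
           \<Union>W\<in>{W. W \<subseteq> {..<n} - X \<and> card W = w}. many_neighbours_in D X W)"
    by blast
  then show ?thesis
    using prob_many_neighbours_in_set_of_size_le[OF p] assms(3,4)
    by (simp add: measure_pmf_prob_UN_le)
qed

definition large_neighbourhoods ::
    "nat \<Rightarrow> real \<Rightarrow> nat \<Rightarrow> real \<Rightarrow> (nat \<Rightarrow> real) \<Rightarrow> real \<Rightarrow> nat set set \<Rightarrow> bool" where
  "large_neighbourhoods n p r \<eta> s c G \<longleftrightarrow>
     (\<forall>V E col X. in_QH n p r \<eta> s V E col X \<and> E \<subseteq> G \<longrightarrow>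
        (\<forall>k\<in>{1..r}.
           card (colour_class V col k) \<ge> card ((\<Union>v\<in>V. nbhd E v) \<inter> colour_class V col k) \<and>
           real (card ((\<Union>v\<in>V. nbhd E v) \<inter> colour_class V col k))
             \<ge> c * min (real n) (real (card X) * real n * p)))"

lemma in_QH_many_neighbours_in:
  assumes Q: "in_QH n p r \<eta> s V E col X" and "E \<subseteq> G" and k: "k \<in> {1..r}"
  shows "G \<in> many_neighbours_in (nat \<lceil>\<eta> * real n * p\<rceil>) X
               ((\<Union>v\<in>V. nbhd E v) \<inter> colour_class V col k - X)"
  unfolding many_neighbours_in_def
proof (intro CollectI ballI)
  fix x assume "x \<in> X"
  define S where "S = nbhd E x \<inter> colour_class V col k"
  have "x \<in> V" using \<open>x \<in> X\<close> Q unfolding in_QH_def colour_class_def by auto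
  moreover have "S \<inter> X = {}"
    using \<open>x \<in> X\<close> Q unfolding in_QH_def S_def nbhd_def by auto
  ultimately have "S \<subseteq> (\<Union>v\<in>V. nbhd E v) \<inter> colour_class V col k - X"
    unfolding S_def by blast
  moreover have "real (card S) = \<eta> * real n * p"
    using \<open>x \<in> X\<close> k Q unfolding in_QH_def S_def by blast
  from this[symmetric] have "card S = nat \<lceil>\<eta> * real n * p\<rceil>" by simp
  moreover have "{x, y} \<in> G" if "y \<in> S" for y
    using that \<open>E \<subseteq> G\<close> unfolding S_def nbhd_def by (auto simp: insert_commute)
  ultimately show "\<exists>S\<subseteq>(\<Union>v\<in>V. nbhd E v) \<inter> colour_class V col k - X.
      card S = nat \<lceil>\<eta> * real n * p\<rceil> \<and> (\<forall>y\<in>S. {x, y} \<in> G)"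
    by blast
qed

lemma not_large_neighbourhoods_imp_many_neighbours_in:
  assumes "\<not> large_neighbourhoods n p r \<eta> s c G" and "0 \<le> c"
  shows "\<exists>t\<in>{1..n}. \<exists>w\<in>{w. w \<le> n \<and> real w < c * real n \<and> real w < c * real t * real n * p}.
           \<exists>X W. X \<subseteq> {..<n} \<and> card X = t \<and> W \<subseteq> {..<n} - X \<and> card W = w \<and>
             G \<in> many_neighbours_in (nat \<lceil>\<eta> * real n * p\<rceil>) X W"
proof -
  obtain V E col X k where Q: "in_QH n p r \<eta> s V E col X" and "E \<subseteq> G" and k: "k \<in> {1..r}"
    and small: "\<not> (card (colour_class V col k) \<ge> card ((\<Union>v\<in>V. nbhd E v) \<inter> colour_class V col k) \<and>
                   real (card ((\<Union>v\<in>V. nbhd E v) \<inter> colour_class V col k))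
                     \<ge> c * min (real n) (real (card X) * real n * p))"
    using assms(1) unfolding large_neighbourhoods_def by blast
  define U where "U = (\<Union>v\<in>V. nbhd E v) \<inter> colour_class V col k"
  have V: "V \<subseteq> {..<n}" and X: "X \<subseteq> V"
    using Q unfolding in_QH_def coloured_graph_def colour_class_def by auto
  then have "finite V" "finite X" using finite_subset[OF V] finite_subset[OF X] by auto
  have "U \<subseteq> colour_class V col k" "colour_class V col k \<subseteq> V"
    unfolding U_def colour_class_def by auto
  then have "card U \<le> card (colour_class V col k)" "U \<subseteq> {..<n}"
    using finite_subset[OF _ \<open>finite V\<close>] V by (blast intro: card_mono)+
  then have U_small: "real (card U) < c * min (real n) (real (card X) * real n * p)"
    using small unfolding U_def by auto
  then have "X \<noteq> {}" by auto
  have "card X \<le> n" using card_mono[OF _ order.trans[OF X V]] by simp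
  have "card (U - X) \<le> card U" using \<open>U \<subseteq> {..<n}\<close> by (simp add: card_mono finite_subset)
  moreover have "c * min (real n) (real (card X) * real n * p) \<le> c * real n"
    "c * min (real n) (real (card X) * real n * p) \<le> c * real (card X) * real n * p"
    using \<open>0 \<le> c\<close> by (simp_all add: mult_left_mono mult.assoc)
  ultimately have "real (card (U - X)) < c * real n" "real (card (U - X)) < c * real (card X) * real n * p"
    using U_small by linarith+
  moreover have "card X \<in> {1..n}" using \<open>X \<noteq> {}\<close> \<open>finite X\<close> \<open>card X \<le> n\<close>
    by (simp add: Suc_le_eq card_gt_0_iff)
  moreover have "card (U - X) \<le> n" using card_mono[of "{..<n}" "U - X"] \<open>U \<subseteq> {..<n}\<close> by auto
  moreover have "G \<in> many_neighbours_in (nat \<lceil>\<eta> * real n * p\<rceil>) X (U - X)"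
    unfolding U_def by (rule in_QH_many_neighbours_in[OF Q \<open>E \<subseteq> G\<close> k])
  ultimately show ?thesis
    using X V \<open>U \<subseteq> {..<n}\<close>
    by (intro bexI[of _ "card X"] bexI[of _ "card (U - X)"] exI[of _ X] exI[of _ "U - X"]) auto
qed

lemma power_mult_power_squared_le:
  fixes R q x :: real
  assumes "1 \<le> R" "0 \<le> q" "R * q\<^sup>2 \<le> x" "2 * w \<le> m"
  shows "(R ^ w * q ^ m)\<^sup>2 \<le> x ^ m"
proof -
  have "(R ^ w * q ^ m)\<^sup>2 = R ^ (2 * w) * (q\<^sup>2) ^ m"
    by (simp add: power_mult_distrib mult.commute power_mult flip: power_mult)
  also have "\<dots> \<le> R ^ m * (q\<^sup>2) ^ m"
    using assms(1,4) by (simp add: power_increasing mult_right_mono)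
  also have "\<dots> \<le> x ^ m"
    using assms(1-3) by (simp add: power_mono flip: power_mult_distrib)
  finally show ?thesis .
qed

text \<open>
  The two bounds on \<open>c\<close>: \<open>c \<le> \<eta>/2\<close> gives \<open>2w \<le> tD\<close>, and \<open>c \<le> \<eta>^2/e^5\<close> gives
  \<open>R q^2 = e^3 w/(\<eta>^2 n) \<le> e^{-2}\<close> for \<open>R = en/w\<close> and \<open>q = ew/(\<eta>n)\<close>.
\<close>

lemma union_bound_term_le:
  fixes n t w D :: nat and p \<eta> c :: real
  assumes \<eta>: "\<eta> > 0" and p: "0 \<le> p" and c: "c \<le> \<eta> / 2" "c \<le> \<eta>\<^sup>2 / exp 5"
    and D: "\<eta> * real n * p \<le> real D" "D \<ge> 1" and t: "t \<ge> 1"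
    and w: "w \<le> n" "real w < c * real n" "real w < c * real t * real n * p"
  shows "real (n choose t) * real (n choose w) * (real (w choose D) * p ^ D) ^ t
           \<le> (real n * exp (- real D)) ^ t"
proof (cases "D \<le> w")
  case False
  then show ?thesis using t by (simp add: binomial_eq_0 zero_power)
next
  case True
  then have "w \<ge> 1" "n \<ge> 1" using D(2) w(1) by linarith+
  then have pos: "real w > 0" "real n > 0" by simp_all
  define R where "R = exp 1 * real n / real w"
  define q where "q = exp 1 * real w / (\<eta> * real n)"
  have "real w \<le> 1 * real n" using w(1) by simp
  also have "\<dots> \<le> exp 1 * real n" by (intro mult_right_mono) simp_all
  finally have "1 \<le> R" unfolding R_def using pos by simp
  have "0 \<le> q" unfolding q_def using \<eta> pos by simp
  have choose_w: "real (n choose w) \<le> R ^ w"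
    unfolding R_def using binomial_le_exp_pow[OF \<open>w \<ge> 1\<close>] .
  have choose_D: "real (w choose D) * p ^ D \<le> q ^ D"
    unfolding q_def using binomial_mult_power_le[OF \<eta> p _ D] pos by simp
  have "2 * real w < real t * real D"
  proof -
    have "real w < (\<eta> / 2) * (real t * real n * p)"
      using w(3) c(1) p by (smt (verit) mult.assoc mult_right_mono of_nat_0_le_iff zero_le_mult_iff)
    also have "\<dots> \<le> real t * real D / 2"
      using mult_right_mono[OF D(1), of "real t"] by (simp add: mult_ac)
    finally show ?thesis by simp
  qed
  then have "2 * w \<le> t * D" by (simp flip: of_nat_mult)
  have "R * q\<^sup>2 = exp 1 ^ 3 * real w / (\<eta>\<^sup>2 * real n)"
    unfolding R_def q_def using pos \<eta> by (simp add: field_simps power2_eq_square power3_eq_cube)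
  also have "\<dots> \<le> exp 1 ^ 3 * (\<eta>\<^sup>2 / exp 5 * real n) / (\<eta>\<^sup>2 * real n)"
    using w(2) mult_right_mono[OF c(2), of "real n"] pos \<eta>
    by (intro divide_right_mono mult_left_mono) simp_all
  also have "\<dots> = exp (-2)"
    using pos \<eta> by (simp add: exp_minus field_simps flip: exp_of_nat_mult exp_add)
  finally have "R * q\<^sup>2 \<le> exp (-2)" .
  have "real (n choose w) * (real (w choose D) * p ^ D) ^ t \<le> R ^ w * q ^ (t * D)"
    using choose_w choose_D p \<open>1 \<le> R\<close> by (simp add: mult.commute power_mult mult_mono power_mono)
  then have "(real (n choose w) * (real (w choose D) * p ^ D) ^ t)\<^sup>2 \<le> (R ^ w * q ^ (t * D))\<^sup>2"
    using p by (intro power_mono) simp_all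
  also have "\<dots> \<le> exp (-2) ^ (t * D)"
    using power_mult_power_squared_le[OF \<open>1 \<le> R\<close> \<open>0 \<le> q\<close> \<open>R * q\<^sup>2 \<le> exp (-2)\<close> \<open>2 * w \<le> t * D\<close>] .
  also have "\<dots> = (exp (- real D) ^ t)\<^sup>2"
    by (simp add: mult.commute power_mult flip: exp_of_nat_mult)
  finally have "real (n choose w) * (real (w choose D) * p ^ D) ^ t \<le> exp (- real D) ^ t"
    by (rule power2_le_imp_le) simp
  moreover have "real (n choose t) \<le> real n ^ t"
    using binomial_le_pow[of t n] by (cases "t \<le> n") (simp_all add: binomial_eq_0 flip: of_nat_power)
  ultimately show ?thesis
    using p by (simp add: power_mult_distrib mult.assoc mult_mono)
qed

lemma union_bound_sum_le:
  fixes n D :: nat and p \<eta> c :: real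
  assumes \<eta>: "\<eta> > 0" and p: "0 \<le> p" and c: "c \<le> \<eta> / 2" "c \<le> \<eta>\<^sup>2 / exp 5"
    and n: "n \<ge> 2" and dense: "4 * ln (real n) \<le> \<eta> * real n * p" and D: "\<eta> * real n * p \<le> real D"
  shows "(\<Sum>t\<in>{1..n}. \<Sum>w\<in>{w. w \<le> n \<and> real w < c * real n \<and> real w < c * real t * real n * p}.
           real (n choose t) * real (n choose w) * (real (w choose D) * p ^ D) ^ t) \<le> 2 / real n"
proof -
  have pos: "real n > 0" "ln (real n) > 0" using n by simp_all
  then have "real D > 0" using dense D by linarith
  then have "D \<ge> 1" by simp
  have base: "real n * exp (- real D) \<le> 1 / real n ^ 3"
    using n dense D by (intro mult_exp_neg_le_inverse_cube) simp_all
  also have "\<dots> \<le> 1" using n by simp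
  finally have "real n * exp (- real D) \<le> 1" .
  have summand_le: "real (n choose t) * real (n choose w) * (real (w choose D) * p ^ D) ^ t \<le> 1 / real n ^ 3"
    if "t \<in> {1..n}" "w \<in> {w. w \<le> n \<and> real w < c * real n \<and> real w < c * real t * real n * p}"
    for t w
  proof -
    have "real (n choose t) * real (n choose w) * (real (w choose D) * p ^ D) ^ t
        \<le> (real n * exp (- real D)) ^ t"
      using that by (intro union_bound_term_le[OF \<eta> p c D \<open>D \<ge> 1\<close>]) auto
    also have "\<dots> \<le> (real n * exp (- real D)) ^ 1"
      using that \<open>real n * exp (- real D) \<le> 1\<close> by (intro power_decreasing) auto
    finally show ?thesis using base by simp
  qed
  have "(\<Sum>t\<in>{1..n}. \<Sum>w\<in>{w. w \<le> n \<and> real w < c * real n \<and> real w < c * real t * real n * p}.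
           real (n choose t) * real (n choose w) * (real (w choose D) * p ^ D) ^ t)
      \<le> (\<Sum>t\<in>{1..n}. \<Sum>w\<in>{w. w \<le> n \<and> real w < c * real n \<and> real w < c * real t * real n * p}.
           1 / real n ^ 3)"
    using summand_le by (intro sum_mono) auto
  also have "\<dots> \<le> (\<Sum>t\<in>{1..n}. \<Sum>w\<in>{..n}. 1 / real n ^ 3)"
    by (intro sum_mono sum_mono2) auto
  also have "\<dots> = real n * (real n + 1) / real n ^ 3" by simp
  also have "\<dots> = (real n + 1) / real n / real n"
    using pos by (simp add: power3_eq_cube)
  also have "\<dots> \<le> 2 / real n"
    using n pos by (intro divide_right_mono) (simp_all add: divide_le_eq)
  finally show ?thesis .
qed

lemma prob_not_large_neighbourhoods_le:
  fixes n :: nat and p \<eta> c :: real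
  assumes \<eta>: "\<eta> > 0" and p: "0 \<le> p" "p \<le> 1" and c: "0 \<le> c" "c \<le> \<eta> / 2" "c \<le> \<eta>\<^sup>2 / exp 5"
    and n: "n \<ge> 2" and dense: "4 * ln (real n) \<le> \<eta> * real n * p"
  shows "measure_pmf.prob (Gnp n p) {G. \<not> large_neighbourhoods n p r \<eta> s c G} \<le> 2 / real n"
proof -
  let ?D = "nat \<lceil>\<eta> * real n * p\<rceil>"
  have "measure_pmf.prob (Gnp n p) {G. \<not> large_neighbourhoods n p r \<eta> s c G}
      \<le> measure_pmf.prob (Gnp n p)
           {G. \<exists>t\<in>{1..n}. \<exists>w\<in>{w. w \<le> n \<and> real w < c * real n \<and> real w < c * real t * real n * p}.
                 \<exists>X W. X \<subseteq> {..<n} \<and> card X = t \<and> W \<subseteq> {..<n} - X \<and> card W = w \<and>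
                   G \<in> many_neighbours_in ?D X W}"
    using not_large_neighbourhoods_imp_many_neighbours_in[OF _ c(1)]
    by (intro measure_pmf.finite_measure_mono) auto
  also have "\<dots> \<le> (\<Sum>t\<in>{1..n}. \<Sum>w\<in>{w. w \<le> n \<and> real w < c * real n \<and> real w < c * real t * real n * p}.
                 real (n choose t) * real (n choose w) * (real (w choose ?D) * p ^ ?D) ^ t)"
    by (rule prob_many_neighbours_in_small_set_le[OF p]) simp_all
  also have "\<dots> \<le> 2 / real n"
    by (rule union_bound_sum_le[OF \<eta> p(1) c(2,3) n dense]) linarith
  finally show ?thesis .
qed

lemma large_neighbourhoods_almost_surely:
  fixes p :: "nat \<Rightarrow> real"
  assumes \<eta>: "\<eta> > 0" and c: "0 \<le> c" "c \<le> \<eta> / 2" "c \<le> \<eta>\<^sup>2 / exp 5"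
    and p: "\<forall>n. 0 \<le> p n \<and> p n \<le> 1"
    and lim: "filterlim (\<lambda>n. p n / (ln (real n) / real n)) at_top sequentially"
  shows "(\<lambda>n. measure_pmf.prob (Gnp n (p n)) {G. large_neighbourhoods n (p n) r \<eta> s c G})
           \<longlonglongrightarrow> 1"
proof (rule measure_pmf_prob_tendsto_1[OF lim_const_over_n])
  show "eventually (\<lambda>n. 1 - 2 / real n
          \<le> measure_pmf.prob (Gnp n (p n)) {G. large_neighbourhoods n (p n) r \<eta> s c G}) sequentially"
    using eventually_four_ln_le[OF \<eta> lim] eventually_ge_at_top[of 2]
  proof eventually_elim
    case (elim n)
    have "measure_pmf.prob (Gnp n (p n)) {G. \<not> large_neighbourhoods n (p n) r \<eta> s c G} \<le> 2 / real n"
      using elim p by (intro prob_not_large_neighbourhoods_le[OF \<eta> _ _ c]) auto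
    moreover have "UNIV - {G. \<not> large_neighbourhoods n (p n) r \<eta> s c G}
        = {G. large_neighbourhoods n (p n) r \<eta> s c G}" by blast
    ultimately show ?case
      using measure_pmf.prob_compl[of "{G. \<not> large_neighbourhoods n (p n) r \<eta> s c G}" "Gnp n (p n)"]
      by simp
  qed
qed

theorem mainTheorem10:
  fixes \<eta> :: real
  assumes "\<eta> > 0"
  shows "\<exists>c>0. \<forall>(r::nat) (p::nat \<Rightarrow> real) (s::nat \<Rightarrow> real).
     r \<ge> 2 \<longrightarrow>
     (\<forall>n. 0 \<le> p n \<and> p n \<le> 1) \<longrightarrow>
     filterlim (\<lambda>n. p n / (ln (real n) / real n)) at_top sequentially \<longrightarrow>
     s \<in> o(\<lambda>n. real n) \<longrightarrow>
     ((\<lambda>n. measure_pmf.prob (Gnp n (p n))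
        {G. \<forall>V E col X. in_QH n (p n) r \<eta> s V E col X \<and> E \<subseteq> G \<longrightarrow>
              (\<forall>k\<in>{1..r}.
                 card (colour_class V col k)
                   \<ge> card ((\<Union>v\<in>V. nbhd E v) \<inter> colour_class V col k) \<and>
                 real (card ((\<Union>v\<in>V. nbhd E v) \<inter> colour_class V col k))
                   \<ge> c * min (real n) (real (card X) * real n * p n))})
      \<longlonglongrightarrow> 1)"
proof -
  define c where "c = min (\<eta> / 2) (\<eta>\<^sup>2 / exp 5)"
  have "c > 0" using assms unfolding c_def by simp
  moreover have c: "0 \<le> c" "c \<le> \<eta> / 2" "c \<le> \<eta>\<^sup>2 / exp 5"
    using \<open>c > 0\<close> unfolding c_def by (auto simp: min_def)
  ultimately show ?thesis
    using large_neighbourhoods_almost_surely[OF assms c] unfolding large_neighbourhoods_def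
    by blast
qed

end
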